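(* Let $N \in \mathbb{R}^{n \times r}$, $V \in \mathbb{R}^{r \times n}$, and for $\kappa\in\mathbb{R}^r_+$ let $f_\kappa(x) = N_\kappa x^V$ on $\mathbb{R}^n_+$; let $S = \mathrm{im}(N)$. Let $M \in \mathbb{R}^{d' \times n}$ and $\gamma\colon \mathbb{R}^r_+\to\mathbb{R}_+^{d'}$, and set $Y_\kappa = \{x \in \mathbb{R}^n_+ \mid x^M = \gamma(\kappa)\}$. Assume $Y_\kappa\subseteq\{x\in\mathbb{R}^n_+\mid f_\kappa(x)=0\}$ for all $\kappa\in\mathbb{R}^r_+$. Assume moreover: (i) $\sigma(\ker(M)) \cap \sigma(S) \neq \{0\}$; (ii) for every $x \in \mathbb{R}^n_+$ there exists $\kappa \in \mathbb{R}^r_+$ with $x \in Y_\kappa$. Then there exist $\kappa^* \in \mathbb{R}^r_+$ and distinct $x^*,y^* \in \mathbb{R}^n_+$ such that $x^*, y^* \in Y_{\kappa^*}$ and $x^* - y^* \in S$.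
   Context: $\mathbb{R}_+$ denotes the strictly positive reals. $(x^V)_j=\prod_i x_i^{v_{ji}}$ and $(x^M)_k=\prod_i x_i^{m_{ki}}$ (real exponents), $N_\kappa=N\,\mathrm{diag}(\kappa)$. $\sigma$ is the componentwise sign vector, $\sigma(T)=\{\sigma(x)\mid x\in T\}$, and $0$ denotes the zero sign vector. *)

theory Defs
  imports "HOL-Analysis.Analysis"
begin

definition pos_orthant :: "(real ^ 'n) set" where
  "pos_orthant = {x. \<forall>i. x $ i > 0}"

definition monom_vec :: "real ^ 'n \<Rightarrow> real ^ 'n ^ 'r \<Rightarrow> real ^ 'r" where
  "monom_vec x V = (\<chi> j. \<Prod>i\<in>UNIV. (x $ i) powr (V $ j $ i))"

definition Nkappa :: "real ^ 'r ^ 'n \<Rightarrow> real ^ 'r \<Rightarrow> real ^ 'r ^ 'n" where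
  "Nkappa N \<kappa> = (\<chi> i j. N $ i $ j * \<kappa> $ j)"

definition f_kappa :: "real ^ 'r ^ 'n \<Rightarrow> real ^ 'n ^ 'r \<Rightarrow> real ^ 'r \<Rightarrow> real ^ 'n \<Rightarrow> real ^ 'n" where
  "f_kappa N V \<kappa> x = Nkappa N \<kappa> *v monom_vec x V"

definition sign_vec :: "real ^ 'n \<Rightarrow> real ^ 'n" where
  "sign_vec x = (\<chi> i. sgn (x $ i))"

definition Y_set :: "real ^ 'n ^ 'd \<Rightarrow> (real ^ 'r \<Rightarrow> real ^ 'd) \<Rightarrow> real ^ 'r \<Rightarrow> (real ^ 'n) set" where
  "Y_set M \<gamma> \<kappa> = {x \<in> pos_orthant. monom_vec x M = \<gamma> \<kappa>}"

end

theory Submission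
  imports Defs
begin

text \<open>A nonzero sign vector shared by some \<open>u \<in> ker M\<close> and some \<open>w \<in> S\<close> lets us solve
  \<open>x - y = w\<close> and \<open>ln x - ln y = u\<close> with \<open>x, y\<close> positive, coordinate by coordinate.
  The second equation gives \<open>x\<^sup>M = y\<^sup>M\<close>, so by (ii) both points lie in the same \<open>Y\<^sub>\<kappa>\<close>.\<close>

lemma exists_pos_exp_scale_diff:
  fixes a b :: real
  assumes "sgn a = sgn b"
  shows "\<exists>t>0. exp a * t - t = b"
proof (cases "a = 0")
  case True
  with assms show ?thesis by (intro exI[of _ 1]) (simp add: sgn_0_0)
next
  case False
  then have "exp a \<noteq> 1" by simp
  moreover have "b / (exp a - 1) > 0"
  proof (cases "a > 0")
    case True
    with assms have "b > 0" by (metis sgn_greater)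
    with True show ?thesis by simp
  next
    case False
    with \<open>a \<noteq> 0\<close> have "a < 0" by simp
    with assms have "b < 0" by (metis sgn_less)
    with \<open>a < 0\<close> show ?thesis by (simp add: divide_neg_neg)
  qed
  moreover have "exp a * (b / (exp a - 1)) - b / (exp a - 1) = b"
    using \<open>exp a \<noteq> 1\<close> by (simp add: divide_simps) (simp add: algebra_simps)
  ultimately show ?thesis by blast
qed

lemma exists_pos_exp_scale_diff_vec:
  fixes u w :: "real ^ 'n"
  assumes "sign_vec u = sign_vec w"
  shows "\<exists>y\<in>pos_orthant. (\<chi> i. exp (u $ i) * y $ i) - y = w"
proof -
  have "\<forall>i. \<exists>t>0. exp (u $ i) * t - t = w $ i"
    using assms exists_pos_exp_scale_diff by (metis sign_vec_def vec_lambda_beta)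
  then obtain t where "\<And>i. t i > 0" "\<And>i. exp (u $ i) * t i - t i = w $ i"
    by metis
  then show ?thesis
    by (intro bexI[of _ "\<chi> i. t i"]) (auto simp: pos_orthant_def vec_eq_iff)
qed

lemma monom_vec_exp_scale:
  fixes y u :: "real ^ 'n" and M :: "real ^ 'n ^ 'd"
  assumes "y \<in> pos_orthant"
  shows "monom_vec (\<chi> i. exp (u $ i) * y $ i) M $ k = exp ((M *v u) $ k) * monom_vec y M $ k"
proof -
  have "(exp (u $ i) * y $ i) powr (M $ k $ i) = exp (M $ k $ i * u $ i) * y $ i powr (M $ k $ i)"
    for i
    using assms by (simp add: pos_orthant_def powr_mult) (simp add: powr_def)
  then show ?thesis
    by (simp add: monom_vec_def matrix_vector_mult_def prod.distrib exp_sum)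
qed

lemma monom_vec_exp_scale_kernel:
  fixes y u :: "real ^ 'n" and M :: "real ^ 'n ^ 'd"
  assumes "y \<in> pos_orthant" and "M *v u = 0"
  shows "monom_vec (\<chi> i. exp (u $ i) * y $ i) M = monom_vec y M"
  using assms(2) by (simp add: vec_eq_iff monom_vec_exp_scale[OF assms(1)])

lemma sign_vec_eq_0_iff: "sign_vec x = 0 \<longleftrightarrow> x = 0"
  by (simp add: sign_vec_def vec_eq_iff sgn_0_0)

lemma common_nonzero_sign_vec:
  fixes A B :: "(real ^ 'n) set"
  assumes "sign_vec ` A \<inter> sign_vec ` B \<noteq> {0}" and "0 \<in> A" and "0 \<in> B"
  obtains u w where "u \<in> A" "w \<in> B" "sign_vec u = sign_vec w" "w \<noteq> 0"
proof -
  have "sign_vec 0 = 0"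
    by (simp add: sign_vec_eq_0_iff)
  with assms(2,3) have "0 \<in> sign_vec ` A \<inter> sign_vec ` B"
    by (metis IntI image_eqI)
  with assms(1) obtain s where "s \<in> sign_vec ` A \<inter> sign_vec ` B" "s \<noteq> 0"
    by blast
  then obtain u w where "u \<in> A" "w \<in> B" "sign_vec u = s" "sign_vec w = s"
    by (metis IntE imageE)
  moreover from \<open>s \<noteq> 0\<close> \<open>sign_vec w = s\<close> have "w \<noteq> 0"
    by (auto simp: sign_vec_eq_0_iff)
  ultimately show ?thesis
    using that by simp
qed

theorem mainTheorem18:
  fixes N :: "real ^ 'r ^ 'n" and V :: "real ^ 'n ^ 'r"
    and M :: "real ^ 'n ^ 'd" and \<gamma> :: "real ^ 'r \<Rightarrow> real ^ 'd"
  assumes gamma_pos: "\<forall>\<kappa>\<in>pos_orthant. \<gamma> \<kappa> \<in> pos_orthant"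
    and Y_sub: "\<forall>\<kappa>\<in>pos_orthant. Y_set M \<gamma> \<kappa> \<subseteq> {x \<in> pos_orthant. f_kappa N V \<kappa> x = 0}"
    and i: "sign_vec ` {u. M *v u = 0} \<inter> sign_vec ` range (\<lambda>u. N *v u) \<noteq> {0}"
    and ii: "\<forall>x\<in>pos_orthant. \<exists>\<kappa>\<in>pos_orthant. x \<in> Y_set M \<gamma> \<kappa>"
  shows "\<exists>\<kappa>\<in>pos_orthant. \<exists>x\<in>pos_orthant. \<exists>y\<in>pos_orthant.
           x \<noteq> y \<and> x \<in> Y_set M \<gamma> \<kappa> \<and> y \<in> Y_set M \<gamma> \<kappa> \<and> x - y \<in> range (\<lambda>u. N *v u)"
proof -
  have "(0::real ^ 'n) \<in> range (\<lambda>u. N *v u)"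
    by (metis matrix_vector_mult_0_right rangeI)
  then obtain u w where "u \<in> {u. M *v u = 0}" and w: "w \<in> range (\<lambda>u. N *v u)"
    and sign: "sign_vec u = sign_vec w" and "w \<noteq> 0"
    using common_nonzero_sign_vec[OF i] by auto
  then have u: "M *v u = 0"
    by simp
  obtain y where y: "y \<in> pos_orthant" and diff: "(\<chi> i. exp (u $ i) * y $ i) - y = w"
    using exists_pos_exp_scale_diff_vec[OF sign] by blast
  define x where "x = (\<chi> i. exp (u $ i) * y $ i)"
  have x: "x \<in> pos_orthant"
    using y by (simp add: x_def pos_orthant_def)
  have "x - y \<in> range (\<lambda>u. N *v u)" and "x \<noteq> y"
    using diff w \<open>w \<noteq> 0\<close> by (auto simp flip: x_def)
  obtain \<kappa> where \<kappa>: "\<kappa> \<in> pos_orthant" "x \<in> Y_set M \<gamma> \<kappa>"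
    using ii x by blast
  moreover have "y \<in> Y_set M \<gamma> \<kappa>"
    using \<kappa>(2) y monom_vec_exp_scale_kernel[OF y u] by (simp add: Y_set_def x_def)
  ultimately show ?thesis
    using x y \<open>x - y \<in> range (\<lambda>u. N *v u)\<close> \<open>x \<noteq> y\<close> by blast
qed

end
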